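(* Let $d \ge 2$. Let $\rho_T$ be a density matrix on $\mathbb{C}^2$ with eigenvalues, sorted in decreasing order, $\{\alpha, 1-\alpha\}$, and let $\rho_A$ be a density matrix on $\mathbb{C}^d$ with eigenvalues, sorted in decreasing order, $\{\beta_1, \beta_2, \dots, \beta_d\}$. Consider the joint state $\rho_{T,A} = \rho_T \otimes \rho_A$ on $\mathbb{C}^2 \otimes \mathbb{C}^d$ and, for a unitary $U$ on $\mathbb{C}^2\otimes\mathbb{C}^d$, the purification channel $\mathcal{E}_U(\rho_{T,A}) = \mathrm{Tr}_A\!\left(U \rho_{T,A} U^\dagger\right)$. Then among all unitaries $U$ on $\mathbb{C}^2\otimes\mathbb{C}^d$, a unitary maximizing the largest eigenvalue of the output target state $\mathcal{E}_U(\rho_{T,A})$ can always be chosen to be a permutation matrix with respect to a product eigenbasis $\{|a\rangle_T|b\rangle_A\}$ of $\rho_T\otimes\rho_A$ (where $\{|a\rangle_T\}$ and $\{|b\rangle_A\}$ are eigenbases of $\rho_T$ and $\rho_A$).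
   Context: $\mathrm{Tr}_A$ denotes the partial trace over the auxiliary system $\mathbb{C}^d$. The purity of the output target qubit is measured by its largest eigenvalue (equivalently by its polarization $\epsilon$, where a diagonal qubit state with eigenvalues $\frac{e^{\epsilon}}{e^\epsilon+e^{-\epsilon}}, \frac{e^{-\epsilon}}{e^\epsilon+e^{-\epsilon}}$ has polarization $\epsilon$); "optimal" means maximizing this purity. *)

theory Defs
  imports "Jordan_Normal_Form.Char_Poly" "HOL-Combinatorics.Permutations"
begin

definition adj :: "complex mat \<Rightarrow> complex mat" where
  "adj A = mat (dim_col A) (dim_row A) (\<lambda>(i,j). cnj (A $$ (j,i)))"

definition unitary_mat :: "nat \<Rightarrow> complex mat \<Rightarrow> bool" where
  "unitary_mat n U \<longleftrightarrow> U \<in> carrier_mat n n \<and> adj U * U = 1\<^sub>m n \<and> U * adj U = 1\<^sub>m n"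

definition density_mat :: "nat \<Rightarrow> complex mat \<Rightarrow> bool" where
  "density_mat n \<rho> \<longleftrightarrow> \<rho> \<in> carrier_mat n n \<and> adj \<rho> = \<rho> \<and>
     (\<forall>v \<in> carrier_vec n. 0 \<le> Re (\<Sum>i<n. cnj (v $ i) * (\<rho> *\<^sub>v v) $ i)) \<and>
     (\<Sum>i<n. \<rho> $$ (i,i)) = 1"

(* Kronecker product of an m x m and an n x n matrix; basis |a>|b> has index a*n+b *)
definition kron :: "complex mat \<Rightarrow> complex mat \<Rightarrow> complex mat" where
  "kron A B = mat (dim_row A * dim_row B) (dim_col A * dim_col B)
     (\<lambda>(i,j). A $$ (i div dim_row B, j div dim_col B) * B $$ (i mod dim_row B, j mod dim_col B))"

definition ptrace_A :: "nat \<Rightarrow> nat \<Rightarrow> complex mat \<Rightarrow> complex mat" where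
  "ptrace_A m d M = mat m m (\<lambda>(a,a'). \<Sum>b<d. M $$ (a*d+b, a'*d+b))"

definition purif_channel :: "nat \<Rightarrow> complex mat \<Rightarrow> complex mat \<Rightarrow> complex mat" where
  "purif_channel d U \<rho> = ptrace_A 2 d (U * \<rho> * adj U)"

(* largest eigenvalue (eigenvalues of Hermitian matrices are real) *)
definition lambda_max :: "complex mat \<Rightarrow> real" where
  "lambda_max M = Max {Re k | k. eigenvalue M k}"

(* columns of the unitary V form an orthonormal eigenbasis of rho *)
definition eigenbasis :: "nat \<Rightarrow> complex mat \<Rightarrow> complex mat \<Rightarrow> bool" where
  "eigenbasis n \<rho> V \<longleftrightarrow> unitary_mat n V \<and> diagonal_mat (adj V * \<rho> * V)"

definition perm_mat :: "nat \<Rightarrow> (nat \<Rightarrow> nat) \<Rightarrow> complex mat" where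
  "perm_mat n \<sigma> = mat n n (\<lambda>(i,j). if i = \<sigma> j then 1 else 0)"

(* permutation matrix w.r.t. the orthonormal basis given by the columns of W *)
definition perm_mat_wrt :: "complex mat \<Rightarrow> nat \<Rightarrow> (nat \<Rightarrow> nat) \<Rightarrow> complex mat" where
  "perm_mat_wrt W n \<sigma> = W * perm_mat n \<sigma> * adj W"

end

theory Submission
  imports Defs "Jordan_Normal_Form.Spectral_Radius"
begin

text \<open>Write \<open>\<rho>\<^sub>T \<otimes> \<rho>\<^sub>A = W D W\<^sup>\<dagger>\<close> with \<open>W = V\<^sub>T \<otimes> V\<^sub>A\<close> a product eigenbasis and \<open>D\<close> diagonal
  with entries \<open>\<lambda>\<^sub>i\<close>. For a unitary \<open>U\<close> the output is \<open>Tr\<^sub>A (R D R\<^sup>\<dagger>)\<close> with \<open>R = U W\<close> unitary.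
  If \<open>(x,y)\<close> is an eigenvector of it for the eigenvalue \<open>k\<close>, then
  \<open>k (|x|\<^sup>2 + |y|\<^sup>2) = \<Sum>\<^sub>i \<lambda>\<^sub>i w\<^sub>i\<close> with weights \<open>0 \<le> w\<^sub>i \<le> |x|\<^sup>2 + |y|\<^sup>2\<close> summing to
  \<open>d (|x|\<^sup>2 + |y|\<^sup>2)\<close>, so \<open>Re k\<close> is at most the sum of the \<open>d\<close> largest \<open>\<lambda>\<^sub>i\<close> (a Ky Fan bound).
  The permutation of the product eigenbasis moving the \<open>d\<close> largest eigenvalues onto the states
  \<open>|0\<rangle>|b\<rangle>\<close> attains this bound: its output is \<open>V\<^sub>T diag(\<Lambda>\<^sub>0, \<Lambda>\<^sub>1) V\<^sub>T\<^sup>\<dagger>\<close>, where \<open>\<Lambda>\<^sub>0\<close> is exactly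
  that sum.\<close>

section \<open>Adjoints and unitary matrices\<close>

lemma index_mult_mat_sum:
  assumes "A \<in> carrier_mat n m" "B \<in> carrier_mat m p" "i < n" "j < p"
  shows "(A * B) $$ (i,j) = (\<Sum>k<m. A $$ (i,k) * B $$ (k,j))"
  using assms by (auto simp: scalar_prod_def lessThan_atLeast0 intro!: sum.cong)

lemma sum_delta_left_complex: "i < (m::nat) \<Longrightarrow> (\<Sum>k<m. (if i = k then 1 else 0) * (f k :: complex)) = f i"
  by (simp add: if_distrib[of "\<lambda>x. x * _"] cong: if_cong)

lemma sum_delta_right_complex: "j < (m::nat) \<Longrightarrow> (\<Sum>k<m. (f k :: complex) * (if k = j then 1 else 0)) = f j"
  by (simp add: if_distrib[of "\<lambda>x. _ * x"] cong: if_cong)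

lemma sum_mult_cnj_self: "(\<Sum>k\<in>A. (u k :: complex) * cnj (u k)) = complex_of_real (\<Sum>k\<in>A. cmod (u k) ^ 2)"
  unfolding of_real_sum by (rule sum.cong, simp, metis complex_norm_square)

lemma adj_carrier[simp]: "A \<in> carrier_mat n m \<Longrightarrow> adj A \<in> carrier_mat m n"
  by (auto simp: adj_def)

lemma adj_dims[simp]: "dim_row (adj A) = dim_col A" "dim_col (adj A) = dim_row A"
  by (auto simp: adj_def)

lemma index_adj[simp]: "i < dim_col A \<Longrightarrow> j < dim_row A \<Longrightarrow> adj A $$ (i,j) = cnj (A $$ (j,i))"
  by (auto simp: adj_def)

lemma adj_adj[simp]: "adj (adj A) = A"
  by (rule eq_matI) auto

lemma adj_one[simp]: "adj (1\<^sub>m n) = 1\<^sub>m n"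
  by (rule eq_matI) auto

lemma adj_mult:
  assumes "A \<in> carrier_mat n m" "B \<in> carrier_mat m p"
  shows "adj (A * B) = adj B * adj A"
proof (rule eq_matI)
  fix i j assume "i < dim_row (adj B * adj A)" "j < dim_col (adj B * adj A)"
  hence i: "i < p" and j: "j < n" using assms by auto
  have "adj (A * B) $$ (i,j) = cnj ((A * B) $$ (j,i))" using assms i j by simp
  also have "\<dots> = (\<Sum>k<m. cnj (A $$ (j,k)) * cnj (B $$ (k,i)))"
    by (subst index_mult_mat_sum[OF assms j i]) simp
  also have "\<dots> = (adj B * adj A) $$ (i,j)"
    using assms i j by (subst index_mult_mat_sum[of _ p m _ n]) (auto intro!: sum.cong)
  finally show "adj (A * B) $$ (i,j) = (adj B * adj A) $$ (i,j)" .
qed (use assms in auto)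

lemma adj_mult3:
  assumes "A \<in> carrier_mat n n" "B \<in> carrier_mat n n" "C \<in> carrier_mat n n"
  shows "adj (A * B * C) = adj C * adj B * adj A"
  using assms by (simp add: adj_mult[of _ n n _ n] assoc_mult_mat[of _ n n _ n _ n] mult_carrier_mat[of _ n n _ n])

lemma unitary_matD:
  assumes "unitary_mat n U"
  shows "U \<in> carrier_mat n n" "adj U \<in> carrier_mat n n" "adj U * U = 1\<^sub>m n" "U * adj U = 1\<^sub>m n"
  using assms by (auto simp: unitary_mat_def)

lemma unitary_mat_mult:
  assumes "unitary_mat n A" "unitary_mat n B"
  shows "unitary_mat n (A * B)"
proof -
  note A = unitary_matD[OF assms(1)] and B = unitary_matD[OF assms(2)]
  have "adj (A * B) * (A * B) = adj B * ((adj A * A) * B)"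
    using A(1,2) B(1,2) by (simp add: adj_mult[of _ n n _ n] assoc_mult_mat[of _ n n _ n _ n] mult_carrier_mat[of _ n n _ n])
  also have "\<dots> = 1\<^sub>m n" using A B by simp
  moreover have "(A * B) * adj (A * B) = A * ((B * adj B) * adj A)"
    using A(1,2) B(1,2) by (simp add: adj_mult[of _ n n _ n] assoc_mult_mat[of _ n n _ n _ n] mult_carrier_mat[of _ n n _ n])
  moreover have "\<dots> = 1\<^sub>m n" using A B by simp
  ultimately show ?thesis
    using A B unfolding unitary_mat_def by auto
qed

section \<open>The spectral theorem for Hermitian matrices\<close>

text \<open>For \<open>u = 0\<close> this is the identity, since \<open>2 / 0 = 0\<close>.\<close>

definition householder :: "nat \<Rightarrow> (nat \<Rightarrow> complex) \<Rightarrow> complex mat" where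
  "householder m u = mat m m (\<lambda>(i,j).
     (if i = j then 1 else 0) - 2 / (\<Sum>k<m. u k * cnj (u k)) * u i * cnj (u j))"

lemma householder_carrier[simp]: "householder m u \<in> carrier_mat m m"
  by (simp add: householder_def)

lemma adj_householder: "adj (householder m u) = householder m u"
proof -
  have "cnj (2 / (\<Sum>k<m. u k * cnj (u k))) = 2 / (\<Sum>k<m. u k * cnj (u k))"
    by (simp add: mult.commute)
  thus ?thesis by (intro eq_matI) (auto simp: householder_def)
qed

lemma householder_involution: "householder m u * householder m u = 1\<^sub>m m"
proof (rule eq_matI)
  define N where "N = (\<Sum>k<m. u k * cnj (u k))"
  define \<alpha> where "\<alpha> = 2 / N"
  have \<alpha>N: "\<alpha> * \<alpha> * N = 2 * \<alpha>"
    by (cases "N = 0") (auto simp: \<alpha>_def)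
  fix i j assume "i < dim_row (1\<^sub>m m)" "j < dim_col (1\<^sub>m m)"
  hence i: "i < m" and j: "j < m" by auto
  have "(householder m u * householder m u) $$ (i,j) = (\<Sum>k<m.
      ((if i = k then 1 else 0) - \<alpha> * u i * cnj (u k)) * ((if k = j then 1 else 0) - \<alpha> * u k * cnj (u j)))"
    by (subst index_mult_mat_sum[of _ m m _ m]) (simp_all add: householder_def \<alpha>_def N_def i j)
  also have "\<dots> = (\<Sum>k<m. (if i = k then 1 else 0) * (if k = j then 1 else 0))
      - (\<Sum>k<m. (if i = k then 1 else 0) * (\<alpha> * u k * cnj (u j)))
      - (\<Sum>k<m. (\<alpha> * u i * cnj (u k)) * (if k = j then 1 else 0))
      + (\<alpha> * \<alpha> * u i * cnj (u j)) * N"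
    unfolding N_def sum_distrib_left sum_subtractf[symmetric] sum.distrib[symmetric]
    by (rule sum.cong) (simp_all add: algebra_simps)
  also have "\<dots> = (if i = j then 1 else 0) - 2 * \<alpha> * u i * cnj (u j) + (\<alpha> * \<alpha> * N) * u i * cnj (u j)"
    by (simp only: sum_delta_left_complex[OF i] sum_delta_right_complex[OF j]) (simp add: algebra_simps)
  also have "\<dots> = (if i = j then 1 else 0)"
    unfolding \<alpha>N by (simp add: algebra_simps)
  finally show "(householder m u * householder m u) $$ (i,j) = 1\<^sub>m m $$ (i,j)"
    using i j by simp
qed (simp_all add: householder_def)

lemma unitary_householder: "unitary_mat m (householder m u)"
  unfolding unitary_mat_def adj_householder householder_involution by simp

text \<open>The reflection along \<open>u = v - \<phi> e\<^sub>0\<close>, with \<open>\<phi>\<close> the phase of \<open>v\<^sub>0\<close>, swaps the unit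
  vectors \<open>v\<close> and \<open>\<phi> e\<^sub>0\<close>.\<close>

lemma exists_unitary_first_col_unit_vec:
  fixes v :: "complex vec"
  assumes v: "v \<in> carrier_vec m" and m: "m > 0" and norm_v: "(\<Sum>i<m. v$i * cnj (v$i)) = 1"
  shows "\<exists>W c. unitary_mat m W \<and> col W 0 = c \<cdot>\<^sub>v v"
proof -
  define r where "r = cmod (v$0)"
  define \<phi> where "\<phi> = (if v$0 = 0 then 1 else v$0 / complex_of_real r)"
  have \<phi>_unit: "\<phi> * cnj \<phi> = 1"
  proof (cases "v$0 = 0")
    case False
    hence "r \<noteq> 0" by (simp add: r_def)
    thus ?thesis using False unfolding \<phi>_def r_def
      by (simp add: complex_norm_square[symmetric] field_simps power2_eq_square)
  qed (simp add: \<phi>_def)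
  have v0: "v$0 = \<phi> * complex_of_real r"
    by (cases "v$0 = 0") (auto simp: \<phi>_def r_def)
  define u where "u = (\<lambda>i. v$i - (if i = 0 then \<phi> else 0))"
  define N where "N = (\<Sum>k<m. u k * cnj (u k))"
  have col: "householder m u $$ (i,0) = cnj \<phi> * v$i" if i: "i < m" for i
  proof (cases "N = 0")
    case True
    hence "(\<Sum>k<m. cmod (u k) ^ 2) = 0" unfolding N_def sum_mult_cnj_self of_real_eq_0_iff .
    hence "u i = 0" using i by (subst (asm) sum_nonneg_eq_0_iff) auto
    hence "v$i = (if i = 0 then \<phi> else 0)" unfolding u_def by (auto split: if_splits)
    thus ?thesis using i m True \<phi>_unit by (simp add: householder_def N_def mult.commute)
  next
    case False
    have "N = (\<Sum>k<m. v$k * cnj (v$k)) - (\<Sum>k<m. (if 0 = k then 1 else 0) * (v$k * cnj \<phi>))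
       - (\<Sum>k<m. (if 0 = k then 1 else 0) * (\<phi> * cnj (v$k)))
       + (\<Sum>k<m. (if 0 = k then 1 else 0) * (\<phi> * cnj \<phi>))"
      unfolding N_def sum_subtractf[symmetric] sum.distrib[symmetric]
      by (rule sum.cong) (simp_all add: u_def algebra_simps)
    also have "\<dots> = 2 - 2 * complex_of_real r"
      unfolding norm_v sum_delta_left_complex[OF m]
      by (subst (2) v0, subst v0) (simp add: algebra_simps \<phi>_unit)
    finally have N: "N = 2 - 2 * complex_of_real r" .
    have "2 / N * u i * cnj (u 0) = (2 * (complex_of_real r - 1) / (2 - 2 * complex_of_real r)) * (u i * cnj \<phi>)"
      unfolding N u_def by (subst v0) (simp add: algebra_simps)
    also have "2 * (complex_of_real r - 1) / (2 - 2 * complex_of_real r) = -1"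
      using False N by (simp add: field_simps)
    finally have "householder m u $$ (i,0) = (if i = 0 then 1 else 0) + u i * cnj \<phi>"
      using i m by (simp add: householder_def N_def[symmetric])
    also have "\<dots> = cnj \<phi> * v$i"
      unfolding u_def using \<phi>_unit by (auto simp: algebra_simps)
    finally show ?thesis .
  qed
  have "col (householder m u) 0 = cnj \<phi> \<cdot>\<^sub>v v"
    using v m col by (intro eq_vecI) (auto simp: carrier_matD[OF householder_carrier])
  thus ?thesis using unitary_householder by blast
qed

lemma exists_unitary_first_col_vec:
  fixes v :: "complex vec"
  assumes v: "v \<in> carrier_vec m" and v_nz: "v \<noteq> 0\<^sub>v m"
  shows "\<exists>W c. unitary_mat m W \<and> col W 0 = c \<cdot>\<^sub>v v"
proof -
  obtain i where i: "i < m" "v$i \<noteq> 0"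
    using v v_nz by (metis eq_vecI carrier_vecD index_zero_vec)
  define s where "s = (\<Sum>k<m. cmod (v$k) ^ 2)"
  have s: "s > 0" unfolding s_def
    by (rule sum_pos2[of _ i]) (use i in auto)
  define w where "w = (1 / complex_of_real (sqrt s)) \<cdot>\<^sub>v v"
  have sqrt_sq: "(complex_of_real (sqrt s))^2 = complex_of_real s"
    using s by (simp flip: of_real_power)
  have "(\<Sum>k<m. w$k * cnj (w$k)) = (\<Sum>k<m. (1 / complex_of_real s) * (v$k * cnj (v$k)))"
    using v s sqrt_sq by (intro sum.cong) (auto simp: w_def power2_eq_square[symmetric])
  also have "\<dots> = (1 / complex_of_real s) * complex_of_real s"
    unfolding sum_distrib_left[symmetric] sum_mult_cnj_self s_def by simp
  also have "\<dots> = 1" using s by simp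
  finally obtain W c where "unitary_mat m W" "col W 0 = c \<cdot>\<^sub>v w"
    using exists_unitary_first_col_unit_vec[of w m] v i by (auto simp: w_def)
  thus ?thesis unfolding w_def smult_smult_assoc by blast
qed

definition scalar_block_diag :: "complex \<Rightarrow> complex mat \<Rightarrow> complex mat" where
  "scalar_block_diag c A = mat (Suc (dim_row A)) (Suc (dim_col A)) (\<lambda>(i,j).
     if i = 0 then (if j = 0 then c else 0) else if j = 0 then 0 else A $$ (i - 1, j - 1))"

lemma scalar_block_diag_carrier[simp]:
  "A \<in> carrier_mat n m \<Longrightarrow> scalar_block_diag c A \<in> carrier_mat (Suc n) (Suc m)"
  by (auto simp: scalar_block_diag_def)

lemma scalar_block_diag_dims[simp]:
  "dim_row (scalar_block_diag c A) = Suc (dim_row A)" "dim_col (scalar_block_diag c A) = Suc (dim_col A)"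
  by (auto simp: scalar_block_diag_def)

lemma index_scalar_block_diag[simp]:
  "scalar_block_diag c A $$ (0,0) = c"
  "j < dim_col A \<Longrightarrow> scalar_block_diag c A $$ (0, Suc j) = 0"
  "i < dim_row A \<Longrightarrow> scalar_block_diag c A $$ (Suc i, 0) = 0"
  "i < dim_row A \<Longrightarrow> j < dim_col A \<Longrightarrow> scalar_block_diag c A $$ (Suc i, Suc j) = A $$ (i,j)"
  by (simp_all add: scalar_block_diag_def)

lemma scalar_block_diag_mult:
  assumes A: "A \<in> carrier_mat n m" and B: "B \<in> carrier_mat m p"
  shows "scalar_block_diag a A * scalar_block_diag b B = scalar_block_diag (a * b) (A * B)"
proof (rule eq_matI)
  fix i j assume "i < dim_row (scalar_block_diag (a * b) (A * B))" "j < dim_col (scalar_block_diag (a * b) (A * B))"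
  hence i: "i < Suc n" and j: "j < Suc p" using A B by auto
  have "(scalar_block_diag a A * scalar_block_diag b B) $$ (i,j) =
      scalar_block_diag a A $$ (i,0) * scalar_block_diag b B $$ (0,j) +
      (\<Sum>k<m. scalar_block_diag a A $$ (i, Suc k) * scalar_block_diag b B $$ (Suc k, j))"
    using A B i j
    by (subst index_mult_mat_sum[of _ "Suc n" "Suc m" _ "Suc p"]) (simp_all add: sum.lessThan_Suc_shift del: sum.lessThan_Suc)
  then show "(scalar_block_diag a A * scalar_block_diag b B) $$ (i,j) = scalar_block_diag (a * b) (A * B) $$ (i,j)"
    using A B i j by (cases i; cases j) (auto simp: index_mult_mat_sum[OF A B] simp del: index_mult_mat(1))
qed (use A B in auto)

lemma adj_scalar_block_diag: "adj (scalar_block_diag c A) = scalar_block_diag (cnj c) (adj A)"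
proof (rule eq_matI)
  fix i j assume "i < dim_row (scalar_block_diag (cnj c) (adj A))" "j < dim_col (scalar_block_diag (cnj c) (adj A))"
  thus "adj (scalar_block_diag c A) $$ (i,j) = scalar_block_diag (cnj c) (adj A) $$ (i,j)"
    by (cases i; cases j) auto
qed auto

lemma scalar_block_diag_one: "scalar_block_diag 1 (1\<^sub>m n) = 1\<^sub>m (Suc n)"
proof (rule eq_matI)
  fix i j assume "i < dim_row (1\<^sub>m (Suc n))" "j < dim_col (1\<^sub>m (Suc n))"
  thus "scalar_block_diag 1 (1\<^sub>m n) $$ (i,j) = 1\<^sub>m (Suc n) $$ (i,j)"
    by (cases i; cases j) auto
qed auto

lemma diagonal_scalar_block_diag: "diagonal_mat A \<Longrightarrow> diagonal_mat (scalar_block_diag c A)"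
  unfolding diagonal_mat_def
proof (intro allI impI)
  fix i j assume "\<forall>i<dim_row A. \<forall>j<dim_col A. i \<noteq> j \<longrightarrow> A $$ (i,j) = 0"
    and "i < dim_row (scalar_block_diag c A)" "j < dim_col (scalar_block_diag c A)" "i \<noteq> j"
  thus "scalar_block_diag c A $$ (i,j) = 0" by (cases i; cases j) auto
qed

lemma unitary_scalar_block_diag: "unitary_mat n U \<Longrightarrow> unitary_mat (Suc n) (scalar_block_diag 1 U)"
  unfolding unitary_mat_def adj_scalar_block_diag
  by (auto simp: scalar_block_diag_mult[of _ n n _ n] scalar_block_diag_one)

lemma unitary_conj_first_col_eigenvector:
  assumes A: "A \<in> carrier_mat n n" and W: "unitary_mat n W" and n: "0 < n"
    and eigen: "A *\<^sub>v col W 0 = \<mu> \<cdot>\<^sub>v col W 0"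
  shows "col (adj W * A * W) 0 = \<mu> \<cdot>\<^sub>v unit_vec n 0"
proof -
  note W = unitary_matD[OF W]
  have "col (adj W * A * W) 0 = (adj W * A) *\<^sub>v col W 0"
    using A W n by (metis col_mult2 mult_carrier_mat)
  also have "\<dots> = adj W *\<^sub>v (A *\<^sub>v col W 0)"
    using A W n by (simp add: assoc_mult_mat_vec[of _ n n _ n])
  also have "\<dots> = \<mu> \<cdot>\<^sub>v (adj W *\<^sub>v col W 0)"
    unfolding eigen using W n by (simp add: mult_mat_vec[of _ n n])
  also have "adj W *\<^sub>v col W 0 = col (adj W * W) 0"
    by (rule col_mult2[symmetric]) (use W n in auto)
  finally show ?thesis using W n by simp
qed

lemma hermitian_eq_scalar_block_diag:
  assumes C: "C \<in> carrier_mat (Suc n) (Suc n)" and herm: "adj C = C"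
    and col0: "col C 0 = \<mu> \<cdot>\<^sub>v unit_vec (Suc n) 0"
  shows "C = scalar_block_diag \<mu> (mat n n (\<lambda>(i,j). C $$ (Suc i, Suc j)))"
proof -
  have first_col: "C $$ (i,0) = (if i = 0 then \<mu> else 0)" if "i < Suc n" for i
    using arg_cong[OF col0, of "\<lambda>v. v $ i"] C that by auto
  have first_row: "C $$ (0,j) = (if j = 0 then \<mu> else 0)" if j: "j < Suc n" for j
  proof -
    have "C $$ (0,j) = cnj (C $$ (j,0))"
      using C j by (subst herm[symmetric]) simp
    thus ?thesis using first_col[OF j] first_col[of 0] by (cases "j = 0") auto
  qed
  show ?thesis
  proof (rule eq_matI)
    fix i j assume "i < dim_row (scalar_block_diag \<mu> (mat n n (\<lambda>(i,j). C $$ (Suc i, Suc j))))"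
      "j < dim_col (scalar_block_diag \<mu> (mat n n (\<lambda>(i,j). C $$ (Suc i, Suc j))))"
    hence i: "i < Suc n" and j: "j < Suc n" by auto
    show "C $$ (i,j) = scalar_block_diag \<mu> (mat n n (\<lambda>(i,j). C $$ (Suc i, Suc j))) $$ (i,j)"
      using first_col[OF i] first_row[OF j] i j by (cases i; cases j) auto
  qed (use C in auto)
qed

lemma adj_mult_conj:
  assumes "A \<in> carrier_mat n n" "W \<in> carrier_mat n n" "E \<in> carrier_mat n n"
  shows "adj (W * E) * A * (W * E) = adj E * (adj W * A * W) * E"
  using assms
  by (simp add: adj_mult[of _ n n _ n] assoc_mult_mat[of _ n n _ n _ n] mult_carrier_mat[of _ n n _ n])

theorem hermitian_unitarily_diagonalizable:
  fixes A :: "complex mat"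
  assumes "A \<in> carrier_mat n n" "adj A = A"
  shows "\<exists>U. unitary_mat n U \<and> diagonal_mat (adj U * A * U)"
  using assms
proof (induction n arbitrary: A)
  case 0
  have "unitary_mat 0 (1\<^sub>m 0)" unfolding unitary_mat_def by simp
  moreover have "diagonal_mat (adj (1\<^sub>m 0) * A * 1\<^sub>m 0)" using 0 by (simp add: diagonal_mat_def)
  ultimately show ?case by blast
next
  case (Suc n)
  note A = Suc.prems(1)
  obtain \<mu> where "eigenvalue A \<mu>" using spectrum_non_empty[OF A] by (auto simp: spectrum_def)
  then obtain v where v: "v \<in> carrier_vec (Suc n)" "v \<noteq> 0\<^sub>v (Suc n)" "A *\<^sub>v v = \<mu> \<cdot>\<^sub>v v"
    using A unfolding eigenvalue_def eigenvector_def by auto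
  obtain W c where W: "unitary_mat (Suc n) W" and W0: "col W 0 = c \<cdot>\<^sub>v v"
    using exists_unitary_first_col_vec[OF v(1,2)] by blast
  note Wd = unitary_matD[OF W]
  have "A *\<^sub>v col W 0 = \<mu> \<cdot>\<^sub>v col W 0"
    unfolding W0 using A v by (simp add: mult_mat_vec smult_smult_assoc mult.commute)
  hence col0: "col (adj W * A * W) 0 = \<mu> \<cdot>\<^sub>v unit_vec (Suc n) 0"
    using unitary_conj_first_col_eigenvector[OF A W] by simp
  define C where "C = adj W * A * W"
  define C' where "C' = mat n n (\<lambda>(i,j). C $$ (Suc i, Suc j))"
  have C: "C \<in> carrier_mat (Suc n) (Suc n)" unfolding C_def using Wd A by (meson mult_carrier_mat)
  have herm: "adj C = C"
    unfolding C_def using Wd A Suc.prems(2) by (simp add: adj_mult3[of _ "Suc n"])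
  have C_block: "C = scalar_block_diag \<mu> C'"
    unfolding C'_def by (rule hermitian_eq_scalar_block_diag[OF C herm col0[folded C_def]])
  have "adj C' = C'"
  proof (rule eq_matI)
    fix i j assume "i < dim_row C'" "j < dim_col C'"
    thus "adj C' $$ (i,j) = C' $$ (i,j)"
      using C index_adj[of "Suc i" C "Suc j"] by (simp add: C'_def herm)
  qed (simp_all add: C'_def)
  then obtain U' where U': "unitary_mat n U'" "diagonal_mat (adj U' * C' * U')"
    using Suc.IH[of C'] by (auto simp: C'_def)
  define U where "U = W * scalar_block_diag 1 U'"
  have U: "unitary_mat (Suc n) U"
    unfolding U_def by (rule unitary_mat_mult[OF W unitary_scalar_block_diag[OF U'(1)]])
  have "adj U * A * U = adj (scalar_block_diag 1 U') * C * scalar_block_diag 1 U'"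
    unfolding U_def C_def using unitary_matD[OF U'(1)] Wd A by (simp add: adj_mult_conj)
  also have "\<dots> = scalar_block_diag \<mu> (adj U' * C' * U')"
    unfolding C_block adj_scalar_block_diag using unitary_matD[OF U'(1)]
    by (simp add: scalar_block_diag_mult[of _ n n _ n] mult_carrier_mat[of _ n n _ n] C'_def)
  finally show ?case
    using U diagonal_scalar_block_diag[OF U'(2)] by auto
qed

lemma density_mat_eigenbasis_exists:
  assumes "density_mat n \<rho>"
  shows "\<exists>V. eigenbasis n \<rho> V"
  using hermitian_unitarily_diagonalizable[of \<rho> n] assms
  unfolding density_mat_def eigenbasis_def by auto

section \<open>Kronecker products\<close>

lemma sum_lessThan_mult_nat: "(\<Sum>k<m*n. f k) = (\<Sum>a<m. \<Sum>b<n. f (a*n+b))" for m n :: nat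
proof -
  have "(\<Sum>b<n. f (a*n+b)) = sum f {a*n..<a*n+n}" for a
    using sum.shift_bounds_nat_ivl[of f 0 "a*n" n] by (simp add: lessThan_atLeast0 add.commute)
  thus ?thesis by (simp add: sum.nat_group)
qed

lemma mult_add_less_mult: "a < m \<Longrightarrow> b < n \<Longrightarrow> a * n + b < m * (n::nat)"
  using mult_le_mono1[of "Suc a" m n] by simp

lemma div_less_of_less_mult: "i < m * (n::nat) \<Longrightarrow> i div n < m"
  by (simp add: less_mult_imp_div_less)

lemma mod_less_of_less_mult: "i < m * (n::nat) \<Longrightarrow> i mod n < n"
  by (cases "n = 0") auto

lemma kron_carrier[simp]:
  "A \<in> carrier_mat m m' \<Longrightarrow> B \<in> carrier_mat n n' \<Longrightarrow> kron A B \<in> carrier_mat (m*n) (m'*n')"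
  by (auto simp: kron_def)

lemma kron_dims[simp]:
  "dim_row (kron A B) = dim_row A * dim_row B" "dim_col (kron A B) = dim_col A * dim_col B"
  by (auto simp: kron_def)

lemma index_kron:
  "i < dim_row A * dim_row B \<Longrightarrow> j < dim_col A * dim_col B \<Longrightarrow>
   kron A B $$ (i,j) = A $$ (i div dim_row B, j div dim_col B) * B $$ (i mod dim_row B, j mod dim_col B)"
  by (auto simp: kron_def)

lemma index_kron_pair:
  assumes "A \<in> carrier_mat m m'" "B \<in> carrier_mat n n'" "a < m" "b < n" "c < m'" "e < n'"
  shows "kron A B $$ (a*n+b, c*n'+e) = A $$ (a,c) * B $$ (b,e)"
  using assms by (simp add: index_kron mult_add_less_mult)

lemma adj_kron: "adj (kron A B) = kron (adj A) (adj B)"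
  by (rule eq_matI) (auto simp: index_kron div_less_of_less_mult mod_less_of_less_mult)

lemma kron_mult:
  assumes A: "A \<in> carrier_mat m m" and B: "B \<in> carrier_mat n n"
    and C: "C \<in> carrier_mat m m" and D: "D \<in> carrier_mat n n"
  shows "kron A B * kron C D = kron (A * C) (B * D)"
proof (rule eq_matI)
  fix i j assume "i < dim_row (kron (A * C) (B * D))" "j < dim_col (kron (A * C) (B * D))"
  hence i: "i < m * n" and j: "j < m * n" using A B C D by auto
  have ij: "i div n < m" "j div n < m" "i mod n < n" "j mod n < n"
    using i j by (auto simp: div_less_of_less_mult mod_less_of_less_mult)
  have "(kron A B * kron C D) $$ (i,j) = (\<Sum>a<m. \<Sum>b<n. kron A B $$ (i,a*n+b) * kron C D $$ (a*n+b,j))"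
    using A B C D i j by (subst index_mult_mat_sum[of _ "m*n" "m*n" _ "m*n"]) (auto simp: sum_lessThan_mult_nat)
  also have "\<dots> = (\<Sum>a<m. \<Sum>b<n. (A $$ (i div n, a) * C $$ (a, j div n)) * (B $$ (i mod n, b) * D $$ (b, j mod n)))"
  proof (intro sum.cong refl)
    fix a b assume ab: "a \<in> {..<m}" "b \<in> {..<n}"
    hence "a*n+b < m*n" by (simp add: mult_add_less_mult)
    thus "kron A B $$ (i,a*n+b) * kron C D $$ (a*n+b,j) =
        (A $$ (i div n, a) * C $$ (a, j div n)) * (B $$ (i mod n, b) * D $$ (b, j mod n))"
      using ab A B C D i j by (simp add: index_kron algebra_simps)
  qed
  also have "\<dots> = (A * C) $$ (i div n, j div n) * (B * D) $$ (i mod n, j mod n)"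
    using ij by (simp add: index_mult_mat_sum[OF A C] index_mult_mat_sum[OF B D] sum_product)
  also have "\<dots> = kron (A * C) (B * D) $$ (i,j)"
    using A B C D i j by (simp add: index_kron)
  finally show "(kron A B * kron C D) $$ (i,j) = kron (A * C) (B * D) $$ (i,j)" .
qed (use A B C D in auto)

lemma kron_one: "kron (1\<^sub>m m) (1\<^sub>m n) = 1\<^sub>m (m * n)"
proof (rule eq_matI)
  fix i j assume "i < dim_row (1\<^sub>m (m * n))" "j < dim_col (1\<^sub>m (m * n))"
  moreover have "(i div n = j div n \<and> i mod n = j mod n) = (i = j)"
    by (metis div_mult_mod_eq)
  ultimately show "kron (1\<^sub>m m) (1\<^sub>m n) $$ (i,j) = 1\<^sub>m (m * n) $$ (i,j)"
    by (auto simp: index_kron div_less_of_less_mult mod_less_of_less_mult)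
qed auto

lemma diagonal_kron:
  assumes "A \<in> carrier_mat m m" "B \<in> carrier_mat n n" "diagonal_mat A" "diagonal_mat B"
  shows "diagonal_mat (kron A B)"
  unfolding diagonal_mat_def
proof (intro allI impI)
  fix i j assume "i < dim_row (kron A B)" "j < dim_col (kron A B)" "i \<noteq> j"
  moreover from \<open>i \<noteq> j\<close> have "i div n \<noteq> j div n \<or> i mod n \<noteq> j mod n"
    by (metis div_mult_mod_eq)
  ultimately show "kron A B $$ (i,j) = 0"
    using assms unfolding diagonal_mat_def
    by (auto simp: index_kron div_less_of_less_mult mod_less_of_less_mult)
qed

lemma unitary_kron:
  assumes "unitary_mat m A" "unitary_mat n B"
  shows "unitary_mat (m * n) (kron A B)"
  using assms unfolding unitary_mat_def
  by (auto simp: adj_kron kron_mult[of _ m _ n] kron_one)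

lemma eigenbasis_kron:
  assumes "eigenbasis m A V" "eigenbasis n B V'" "A \<in> carrier_mat m m" "B \<in> carrier_mat n n"
  shows "eigenbasis (m * n) (kron A B) (kron V V')"
proof -
  note V = unitary_matD[OF assms(1)[unfolded eigenbasis_def, THEN conjunct1]]
  note V' = unitary_matD[OF assms(2)[unfolded eigenbasis_def, THEN conjunct1]]
  have "adj (kron V V') * kron A B * kron V V' = kron (adj V * A * V) (adj V' * B * V')"
    using V V' assms(3,4) by (simp add: adj_kron kron_mult[of _ m _ n] mult_carrier_mat[of _ m m _ m] mult_carrier_mat[of _ n n _ n])
  moreover have "diagonal_mat (kron (adj V * A * V) (adj V' * B * V'))"
    using assms V V' unfolding eigenbasis_def by (meson diagonal_kron mult_carrier_mat)
  ultimately show ?thesis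
    using assms unitary_kron unfolding eigenbasis_def by auto
qed

section \<open>Partial traces of conjugated states\<close>

lemma index_mult_adj_sum:
  assumes "A \<in> carrier_mat n k" "X \<in> carrier_mat k l" "C \<in> carrier_mat n' l" "p < n" "q < n'"
  shows "(A * X * adj C) $$ (p,q) = (\<Sum>i<k. \<Sum>j<l. A $$ (p,i) * X $$ (i,j) * cnj (C $$ (q,j)))"
proof -
  have "(A * X * adj C) $$ (p,q) = (\<Sum>j<l. (A * X) $$ (p,j) * cnj (C $$ (q,j)))"
    using assms by (subst index_mult_mat_sum[of _ n l _ n']) auto
  also have "\<dots> = (\<Sum>j<l. \<Sum>i<k. A $$ (p,i) * X $$ (i,j) * cnj (C $$ (q,j)))"
    using assms by (intro sum.cong refl) (simp add: index_mult_mat_sum[OF assms(1,2)] sum_distrib_right del: index_mult_mat(1))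
  finally show ?thesis by (simp add: sum.swap[of _ "{..<l}"])
qed

lemma unitary_mat_cols_orthonormal:
  assumes "unitary_mat n B" "e < n" "e' < n"
  shows "(\<Sum>b<n. B $$ (b,e) * cnj (B $$ (b,e'))) = (if e = e' then 1 else 0)"
proof -
  note B = unitary_matD[OF assms(1)]
  have "(adj B * B) $$ (e',e) = (\<Sum>b<n. B $$ (b,e) * cnj (B $$ (b,e')))"
    using assms B by (subst index_mult_mat_sum[of _ n n _ n]) (auto simp: mult.commute intro!: sum.cong)
  thus ?thesis using B(3) assms(2,3) by auto
qed

lemma unitary_mat_rows_orthonormal:
  assumes "unitary_mat n B" "p < n" "q < n"
  shows "(\<Sum>i<n. B $$ (p,i) * cnj (B $$ (q,i))) = (if p = q then 1 else 0)"
proof -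
  note B = unitary_matD[OF assms(1)]
  have "(B * adj B) $$ (p,q) = (\<Sum>i<n. B $$ (p,i) * cnj (B $$ (q,i)))"
    using assms B by (subst index_mult_mat_sum[of _ n n _ n]) (auto intro!: sum.cong)
  thus ?thesis using B(4) assms(2,3) by auto
qed

lemma ptrace_A_carrier[simp]: "ptrace_A m d M \<in> carrier_mat m m"
  by (simp add: ptrace_A_def)

lemma ptrace_A_dims[simp]: "dim_row (ptrace_A m d M) = m" "dim_col (ptrace_A m d M) = m"
  by (simp_all add: ptrace_A_def)

lemma index_ptrace_A:
  "a < m \<Longrightarrow> a' < m \<Longrightarrow> ptrace_A m d M $$ (a,a') = (\<Sum>b<d. M $$ (a*d+b, a'*d+b))"
  by (simp add: ptrace_A_def)

text \<open>The auxiliary unitary \<open>B\<close> drops out of the partial trace because its columns are orthonormal.\<close>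

lemma ptrace_A_kron_conj:
  assumes A: "A \<in> carrier_mat m m" and B: "unitary_mat d B" and X: "X \<in> carrier_mat (m*d) (m*d)"
  shows "ptrace_A m d (kron A B * X * adj (kron A B)) = A * ptrace_A m d X * adj A"
proof (rule eq_matI)
  note Bd = unitary_matD[OF B]
  have K: "kron A B \<in> carrier_mat (m*d) (m*d)" using A Bd by simp
  have P: "ptrace_A m d X \<in> carrier_mat m m" by simp
  fix a a' assume "a < dim_row (A * ptrace_A m d X * adj A)" "a' < dim_col (A * ptrace_A m d X * adj A)"
  hence a: "a < m" and a': "a' < m" using A by auto
  have entry: "(kron A B * X * adj (kron A B)) $$ (a*d+b, a'*d+b) = (\<Sum>c<m. \<Sum>e<d. \<Sum>c'<m. \<Sum>e'<d.
      A $$ (a,c) * B $$ (b,e) * X $$ (c*d+e, c'*d+e') * cnj (A $$ (a',c') * B $$ (b,e')))" if b: "b < d" for b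
  proof -
    have "a*d+b < m*d" "a'*d+b < m*d" using a a' b by (simp_all add: mult_add_less_mult)
    thus ?thesis using a a' b A Bd
      by (simp add: index_mult_adj_sum[OF K X K] sum_lessThan_mult_nat index_kron_pair del: index_mult_mat(1))
  qed
  have "ptrace_A m d (kron A B * X * adj (kron A B)) $$ (a,a') =
      (\<Sum>b<d. (kron A B * X * adj (kron A B)) $$ (a*d+b, a'*d+b))"
    using a a' by (simp add: index_ptrace_A del: index_mult_mat(1))
  also have "\<dots> = (\<Sum>b<d. \<Sum>c<m. \<Sum>e<d. \<Sum>c'<m. \<Sum>e'<d.
      A $$ (a,c) * B $$ (b,e) * X $$ (c*d+e, c'*d+e') * cnj (A $$ (a',c') * B $$ (b,e')))"
    by (intro sum.cong refl) (simp add: entry)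
  also have "\<dots> = (\<Sum>c<m. \<Sum>e<d. \<Sum>c'<m. \<Sum>e'<d.
      A $$ (a,c) * X $$ (c*d+e, c'*d+e') * cnj (A $$ (a',c')) * (\<Sum>b<d. B $$ (b,e) * cnj (B $$ (b,e'))))"
    by (subst sum.swap, rule sum.cong[OF refl], subst sum.swap, rule sum.cong[OF refl],
        subst sum.swap, rule sum.cong[OF refl], subst sum.swap)
      (simp add: sum_distrib_left algebra_simps)
  also have "\<dots> = (\<Sum>c<m. \<Sum>c'<m. A $$ (a,c) * (\<Sum>e<d. X $$ (c*d+e, c'*d+e)) * cnj (A $$ (a',c')))"
    by (subst sum.swap) (simp add: unitary_mat_cols_orthonormal[OF B] sum_distrib_left sum_distrib_right
        if_distrib[of "\<lambda>x. _ * x"] cong: if_cong)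
  also have "\<dots> = (A * ptrace_A m d X * adj A) $$ (a,a')"
    using a a' by (simp add: index_mult_adj_sum[OF A P A] index_ptrace_A del: index_mult_mat(1))
  finally show "ptrace_A m d (kron A B * X * adj (kron A B)) $$ (a,a') = (A * ptrace_A m d X * adj A) $$ (a,a')" .
qed (use A in auto)

lemma diagonal_ptrace_A:
  assumes "X \<in> carrier_mat (m*d) (m*d)" "diagonal_mat X"
  shows "diagonal_mat (ptrace_A m d X)"
  unfolding diagonal_mat_def
proof (intro allI impI)
  fix c c' assume "c < dim_row (ptrace_A m d X)" "c' < dim_col (ptrace_A m d X)" "c \<noteq> c'"
  moreover have "c*d+e \<noteq> c'*d+e" if "e < d" for e
    using \<open>c \<noteq> c'\<close> that by (metis add_right_cancel mult_right_cancel not_less_zero)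
  ultimately show "ptrace_A m d X $$ (c,c') = 0"
    using assms unfolding diagonal_mat_def by (auto simp: index_ptrace_A mult_add_less_mult intro!: sum.neutral)
qed

lemma eigenvalue_unitary_conj_diagonal:
  assumes V: "unitary_mat n V" and \<Delta>: "\<Delta> \<in> carrier_mat n n" "diagonal_mat \<Delta>" and c: "c < n"
  shows "eigenvalue (V * \<Delta> * adj V) (\<Delta> $$ (c,c))"
proof -
  note Vd = unitary_matD[OF V]
  have "col (V * \<Delta>) c = \<Delta> $$ (c,c) \<cdot>\<^sub>v col V c"
  proof (rule eq_vecI)
    fix i assume "i < dim_vec (\<Delta> $$ (c,c) \<cdot>\<^sub>v col V c)"
    hence i: "i < n" using Vd by simp
    have "(V * \<Delta>) $$ (i,c) = (\<Sum>k<n. V $$ (i,k) * (if k = c then \<Delta> $$ (c,c) else 0))"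
      using Vd \<Delta> i c unfolding diagonal_mat_def
      by (subst index_mult_mat_sum[of _ n n _ n]) (auto intro!: sum.cong)
    also have "\<dots> = \<Delta> $$ (c,c) * V $$ (i,c)"
      using c by (simp add: if_distrib[of "\<lambda>x. _ * x"] cong: if_cong)
    finally have "(V * \<Delta>) $$ (i,c) = \<Delta> $$ (c,c) * V $$ (i,c)" .
    moreover have "col (V * \<Delta>) c $ i = (V * \<Delta>) $$ (i,c)"
      by (rule index_col) (use Vd \<Delta> i c in simp_all)
    moreover have "(\<Delta> $$ (c,c) \<cdot>\<^sub>v col V c) $ i = \<Delta> $$ (c,c) * V $$ (i,c)"
      using Vd i c by simp
    ultimately show "col (V * \<Delta>) c $ i = (\<Delta> $$ (c,c) \<cdot>\<^sub>v col V c) $ i"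
      by (simp only:)
  qed (use Vd \<Delta> in auto)
  moreover have "V * \<Delta> * adj V * V = V * \<Delta>"
    using Vd \<Delta> by (simp add: assoc_mult_mat[of _ n n _ n _ n] mult_carrier_mat[of _ n n _ n])
  ultimately have eigen: "(V * \<Delta> * adj V) *\<^sub>v col V c = \<Delta> $$ (c,c) \<cdot>\<^sub>v col V c"
    using Vd \<Delta> c by (metis col_mult2 mult_carrier_mat)
  have "col V c \<noteq> 0\<^sub>v n"
  proof
    assume "col V c = 0\<^sub>v n"
    have "V $$ (k,c) = 0" if "k < n" for k
    proof -
      have "V $$ (k,c) = col V c $ k" using Vd c that by simp
      thus ?thesis using \<open>col V c = 0\<^sub>v n\<close> that by simp
    qed
    hence "(adj V * V) $$ (c,c) = 0"
      using Vd c by (subst index_mult_mat_sum[of _ n n _ n]) auto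
    thus False using Vd c by simp
  qed
  moreover have "V * \<Delta> * adj V \<in> carrier_mat n n" "col V c \<in> carrier_vec n"
    using Vd \<Delta> c by auto
  ultimately show ?thesis
    unfolding eigenvalue_def eigenvector_def using eigen by blast
qed

lemma perm_mat_conj:
  assumes \<sigma>: "\<sigma> permutes {..<n}" and X: "X \<in> carrier_mat n n"
  shows "perm_mat n \<sigma> * X * adj (perm_mat n \<sigma>) =
    mat n n (\<lambda>(i,j). X $$ (inv_into UNIV \<sigma> i, inv_into UNIV \<sigma> j))"
proof (rule eq_matI)
  have P: "perm_mat n \<sigma> \<in> carrier_mat n n" by (simp add: perm_mat_def)
  fix p q assume "p < dim_row (mat n n (\<lambda>(i,j). X $$ (inv_into UNIV \<sigma> i, inv_into UNIV \<sigma> j)))"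
    "q < dim_col (mat n n (\<lambda>(i,j). X $$ (inv_into UNIV \<sigma> i, inv_into UNIV \<sigma> j)))"
  hence p: "p < n" and q: "q < n" by auto
  have \<sigma>_eq: "(r = \<sigma> k) = (k = inv_into UNIV \<sigma> r)" for r k
    using permutes_inv_eq[OF \<sigma>] by metis
  have inv_lt: "inv_into UNIV \<sigma> r < n" if "r < n" for r
    using permutes_in_image[OF permutes_inv[OF \<sigma>]] that by simp
  have P_entry: "perm_mat n \<sigma> $$ (r,k) = (if inv_into UNIV \<sigma> r = k then 1 else 0)" if "r < n" "k < n" for r k
    using that by (auto simp: perm_mat_def \<sigma>_eq)
  have P_entry_cnj: "cnj (perm_mat n \<sigma> $$ (r,k)) = (if k = inv_into UNIV \<sigma> r then 1 else 0)" if "r < n" "k < n" for r k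
    using that by (auto simp: P_entry)
  have "(perm_mat n \<sigma> * X * adj (perm_mat n \<sigma>)) $$ (p,q) =
      (\<Sum>i<n. perm_mat n \<sigma> $$ (p,i) * (\<Sum>j<n. X $$ (i,j) * cnj (perm_mat n \<sigma> $$ (q,j))))"
    unfolding index_mult_adj_sum[OF P X P p q] by (simp add: sum_distrib_left mult.assoc)
  also have "\<dots> = (\<Sum>i<n. (if inv_into UNIV \<sigma> p = i then 1 else 0) * X $$ (i, inv_into UNIV \<sigma> q))"
    using p q inv_lt[OF q] by (intro sum.cong refl) (simp add: P_entry[OF p] P_entry_cnj[OF q] sum_delta_right_complex)
  also have "\<dots> = X $$ (inv_into UNIV \<sigma> p, inv_into UNIV \<sigma> q)"
    by (rule sum_delta_left_complex[OF inv_lt[OF p]])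
  finally show "(perm_mat n \<sigma> * X * adj (perm_mat n \<sigma>)) $$ (p,q) =
      mat n n (\<lambda>(i,j). X $$ (inv_into UNIV \<sigma> i, inv_into UNIV \<sigma> j)) $$ (p,q)"
    using p q by simp
qed (simp_all add: perm_mat_def)

section \<open>An upper bound on the eigenvalues of the reduced target state\<close>

lemma sum_weighted_le_top_sum:
  fixes \<mu> c :: "nat \<Rightarrow> real"
  assumes I: "finite I" and S: "S \<subseteq> I" "S \<noteq> {}"
    and c: "\<forall>i\<in>I. 0 \<le> c i \<and> c i \<le> N"
    and sum_c: "(\<Sum>i\<in>I. c i) = real (card S) * N"
    and top: "\<forall>i\<in>S. \<forall>j\<in>I - S. \<mu> j \<le> \<mu> i"
  shows "(\<Sum>i\<in>I. \<mu> i * c i) \<le> N * (\<Sum>i\<in>S. \<mu> i)"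
proof -
  have finS: "finite S" using I S finite_subset by blast
  define t where "t = Min (\<mu> ` S)"
  have t_le: "\<forall>i\<in>S. t \<le> \<mu> i" unfolding t_def using finS by auto
  have "t \<in> \<mu> ` S" unfolding t_def using finS S(2) by (intro Min_in) auto
  hence t_ge: "\<forall>j\<in>I - S. \<mu> j \<le> t" using top by auto
  have inside: "(\<Sum>i\<in>S. \<mu> i * (c i - N)) \<le> (\<Sum>i\<in>S. t * (c i - N))"
  proof (rule sum_mono)
    fix i assume i: "i \<in> S"
    hence "c i - N \<le> 0" using c S by auto
    thus "\<mu> i * (c i - N) \<le> t * (c i - N)" using t_le i by (simp add: mult_right_mono_neg)
  qed
  have outside: "(\<Sum>i\<in>I - S. \<mu> i * c i) \<le> (\<Sum>i\<in>I - S. t * c i)"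
    using t_ge c by (intro sum_mono) (simp add: mult_right_mono)
  have split: "(\<Sum>i\<in>I. f i) = (\<Sum>i\<in>S. f i) + (\<Sum>i\<in>I - S. f i)" for f :: "nat \<Rightarrow> real"
    using sum.subset_diff[OF S(1) I] by (simp add: add.commute)
  have "(\<Sum>i\<in>S. t * (c i - N)) + (\<Sum>i\<in>I - S. t * c i) = t * ((\<Sum>i\<in>I. c i) - real (card S) * N)"
    unfolding split[of c] by (simp add: sum_distrib_left[symmetric] sum_subtractf algebra_simps)
  hence "(\<Sum>i\<in>S. t * (c i - N)) + (\<Sum>i\<in>I - S. t * c i) = 0" unfolding sum_c by simp
  moreover have "(\<Sum>i\<in>S. \<mu> i * (c i - N)) = (\<Sum>i\<in>S. \<mu> i * c i) - N * (\<Sum>i\<in>S. \<mu> i)"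
    by (simp add: sum_subtractf sum_distrib_left algebra_simps)
  ultimately show ?thesis using inside outside split[of "\<lambda>i. \<mu> i * c i"] by linarith
qed

lemma cmod_add_mult_sq_le: "cmod (x*y + z*w)^2 \<le> (cmod x^2 + cmod z^2) * (cmod y^2 + cmod w^2)"
proof -
  have "cmod (x*y + z*w)^2 \<le> (cmod x * cmod y + cmod z * cmod w)^2"
    by (simp add: power_mono norm_mult[symmetric] norm_triangle_ineq)
  also have "\<dots> \<le> (cmod x^2 + cmod z^2) * (cmod y^2 + cmod w^2)"
    using zero_le_power2[of "cmod x * cmod w - cmod z * cmod y"]
    by (simp add: power2_eq_square algebra_simps)
  finally show ?thesis .
qed

lemma index_conj_diagonal:
  assumes R: "R \<in> carrier_mat n n" and D: "D \<in> carrier_mat n n" "diagonal_mat D"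
    and p: "p < n" and q: "q < n"
  shows "(R * D * adj R) $$ (p,q) = (\<Sum>i<n. R $$ (p,i) * D $$ (i,i) * cnj (R $$ (q,i)))"
  unfolding index_mult_adj_sum[OF R D(1) R p q]
proof (intro sum.cong refl)
  fix i assume "i \<in> {..<n}"
  hence "(\<Sum>j<n. R $$ (p,i) * D $$ (i,j) * cnj (R $$ (q,j))) =
      (\<Sum>j<n. if j = i then R $$ (p,i) * D $$ (i,i) * cnj (R $$ (q,i)) else 0)"
    using D unfolding diagonal_mat_def by (intro sum.cong) auto
  thus "(\<Sum>j<n. R $$ (p,i) * D $$ (i,j) * cnj (R $$ (q,j))) = R $$ (p,i) * D $$ (i,i) * cnj (R $$ (q,i))"
    using \<open>i \<in> {..<n}\<close> by simp
qed

text \<open>\<open>qubit_weight d R x y i\<close> is the squared norm of \<open>(\<langle>x,y| \<otimes> 1) R e\<^sub>i\<close>: the weight with which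
  the \<open>i\<close>-th eigenvalue enters the Rayleigh quotient of the reduced state along \<open>(x,y)\<close>.\<close>

definition qubit_weight :: "nat \<Rightarrow> complex mat \<Rightarrow> complex \<Rightarrow> complex \<Rightarrow> nat \<Rightarrow> real" where
  "qubit_weight d R x y i = (\<Sum>b<d. cmod (x * cnj (R $$ (b,i)) + y * cnj (R $$ (d+b,i)))^2)"

lemma ptrace_conj_diagonal_quadratic_form:
  assumes R: "R \<in> carrier_mat (2*d) (2*d)" and D: "D \<in> carrier_mat (2*d) (2*d)" "diagonal_mat D"
  defines "M \<equiv> ptrace_A 2 d (R * D * adj R)"
  shows "cnj x * (M $$ (0,0) * x + M $$ (0,1) * y) + cnj y * (M $$ (1,0) * x + M $$ (1,1) * y)
    = (\<Sum>i<2*d. D $$ (i,i) * complex_of_real (qubit_weight d R x y i))"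
proof -
  define r where "r = (\<lambda>p i. R $$ (p,i))"
  define \<delta> where "\<delta> = (\<lambda>i. D $$ (i,i))"
  define z where "z = (\<lambda>i b. x * cnj (r b i) + y * cnj (r (d+b) i))"
  have M: "M $$ (a,a') = (\<Sum>b<d. \<Sum>i<2*d. r (a*d+b) i * \<delta> i * cnj (r (a'*d+b) i))"
    if "a < 2" "a' < 2" for a a'
    using that unfolding M_def r_def \<delta>_def
    by (auto simp: index_ptrace_A index_conj_diagonal[OF R D] mult_add_less_mult intro!: sum.cong)
  have "cnj x * (M $$ (0,0) * x + M $$ (0,1) * y) + cnj y * (M $$ (1,0) * x + M $$ (1,1) * y)
      = (cnj x * x) * M $$ (0,0) + (cnj x * y) * M $$ (0,1) + (cnj y * x) * M $$ (1,0) + (cnj y * y) * M $$ (1,1)"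
    by (simp add: algebra_simps)
  also have "\<dots> = (\<Sum>b<d. \<Sum>i<2*d. (cnj x * x) * (r b i * \<delta> i * cnj (r b i))
          + (cnj x * y) * (r b i * \<delta> i * cnj (r (d+b) i))
          + (cnj y * x) * (r (d+b) i * \<delta> i * cnj (r b i))
          + (cnj y * y) * (r (d+b) i * \<delta> i * cnj (r (d+b) i)))"
    using M[of 0 0] M[of 0 1] M[of 1 0] M[of 1 1] by (simp only: sum.distrib sum_distrib_left) simp
  also have "\<dots> = (\<Sum>b<d. \<Sum>i<2*d. \<delta> i * (z i b * cnj (z i b)))"
    unfolding z_def by (intro sum.cong refl) (simp add: algebra_simps)
  also have "\<dots> = (\<Sum>i<2*d. \<delta> i * complex_of_real (qubit_weight d R x y i))"
    unfolding qubit_weight_def of_real_sum sum_distrib_left z_def r_def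
    by (subst sum.swap) (simp only: complex_norm_square)
  finally show ?thesis unfolding \<delta>_def .
qed

lemma sum_lessThan_double: "(\<Sum>p<2*d. f p) = (\<Sum>b<d. f b) + (\<Sum>b<d. f (d+b))" for d :: nat
  by (subst sum_lessThan_mult_nat) (simp add: numeral_2_eq_2)

lemma qubit_weight_nonneg: "0 \<le> qubit_weight d R x y i"
  by (simp add: qubit_weight_def sum_nonneg)

lemma qubit_weight_le:
  assumes R: "unitary_mat (2*d) R" and i: "i < 2*d"
  shows "qubit_weight d R x y i \<le> cmod x ^ 2 + cmod y ^ 2"
proof -
  have "qubit_weight d R x y i \<le> (\<Sum>b<d. (cmod x ^ 2 + cmod y ^ 2) * (cmod (R $$ (b,i)) ^ 2 + cmod (R $$ (d+b,i)) ^ 2))"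
    unfolding qubit_weight_def by (rule sum_mono) (metis cmod_add_mult_sq_le complex_mod_cnj)
  also have "\<dots> = (cmod x ^ 2 + cmod y ^ 2) * (\<Sum>p<2*d. cmod (R $$ (p,i)) ^ 2)"
    unfolding sum_lessThan_double sum.distrib[symmetric] sum_distrib_left by (rule sum.cong) (simp_all add: distrib_left)
  also have "(\<Sum>p<2*d. cmod (R $$ (p,i)) ^ 2) = 1"
  proof -
    have "(\<Sum>p<2*d. R $$ (p,i) * cnj (R $$ (p,i))) = 1"
      using unitary_mat_cols_orthonormal[OF R i i] by simp
    thus ?thesis by (simp only: sum_mult_cnj_self of_real_eq_1_iff)
  qed
  finally show ?thesis by simp
qed

lemma sum_qubit_weight:
  assumes R: "unitary_mat (2*d) R"
  shows "(\<Sum>i<2*d. qubit_weight d R x y i) = real d * (cmod x ^ 2 + cmod y ^ 2)"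
proof -
  have "complex_of_real (\<Sum>i<2*d. qubit_weight d R x y i) =
      (\<Sum>b<d. \<Sum>i<2*d. (x * cnj (R $$ (b,i)) + y * cnj (R $$ (d+b,i))) * cnj (x * cnj (R $$ (b,i)) + y * cnj (R $$ (d+b,i))))"
    unfolding qubit_weight_def of_real_sum by (subst sum.swap) (simp only: complex_norm_square)
  also have "\<dots> = (\<Sum>b<d. complex_of_real (cmod x ^ 2 + cmod y ^ 2))"
  proof (rule sum.cong[OF refl])
    fix b assume "b \<in> {..<d}"
    hence b: "b < 2*d" "d + b < 2*d" "d + b \<noteq> b" by auto
    have "(\<Sum>i<2*d. (x * cnj (R $$ (b,i)) + y * cnj (R $$ (d+b,i))) * cnj (x * cnj (R $$ (b,i)) + y * cnj (R $$ (d+b,i))))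
      = (x * cnj x) * (\<Sum>i<2*d. R $$ (b,i) * cnj (R $$ (b,i)))
      + (x * cnj y) * (\<Sum>i<2*d. R $$ (d+b,i) * cnj (R $$ (b,i)))
      + (y * cnj x) * (\<Sum>i<2*d. R $$ (b,i) * cnj (R $$ (d+b,i)))
      + (y * cnj y) * (\<Sum>i<2*d. R $$ (d+b,i) * cnj (R $$ (d+b,i)))"
      unfolding sum_distrib_left sum.distrib[symmetric] by (intro sum.cong refl) (simp add: algebra_simps)
    also have "\<dots> = x * cnj x + y * cnj y"
      using b by (simp add: unitary_mat_rows_orthonormal[OF R])
    finally show "(\<Sum>i<2*d. (x * cnj (R $$ (b,i)) + y * cnj (R $$ (d+b,i))) * cnj (x * cnj (R $$ (b,i)) + y * cnj (R $$ (d+b,i))))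
      = complex_of_real (cmod x ^ 2 + cmod y ^ 2)" by (simp only: of_real_add complex_norm_square)
  qed
  also have "\<dots> = complex_of_real (real d * (cmod x ^ 2 + cmod y ^ 2))"
    by simp
  finally show ?thesis by (simp only: of_real_eq_iff)
qed

theorem eigenvalue_ptrace_conj_le_top_sum:
  assumes d: "d > 0" and R: "unitary_mat (2*d) R"
    and D: "D \<in> carrier_mat (2*d) (2*d)" "diagonal_mat D"
    and S: "S \<subseteq> {..<2*d}" "card S = d"
    and top: "\<forall>i\<in>S. \<forall>j\<in>{..<2*d} - S. Re (D $$ (j,j)) \<le> Re (D $$ (i,i))"
    and k: "eigenvalue (ptrace_A 2 d (R * D * adj R)) k"
  shows "Re k \<le> (\<Sum>i\<in>S. Re (D $$ (i,i)))"
proof -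
  define M where "M = ptrace_A 2 d (R * D * adj R)"
  obtain v where v: "v \<in> carrier_vec 2" "v \<noteq> 0\<^sub>v 2" "M *\<^sub>v v = k \<cdot>\<^sub>v v"
    using k unfolding M_def eigenvalue_def eigenvector_def by auto
  define x y where "x = v $ 0" and "y = v $ 1"
  define N where "N = cmod x ^ 2 + cmod y ^ 2"
  have Mv: "(M *\<^sub>v v) $ a = M $$ (a,0) * x + M $$ (a,1) * y" if "a < 2" for a
    using that v(1) by (simp add: M_def scalar_prod_def numeral_2_eq_2 x_def y_def)
  have "M $$ (0,0) * x + M $$ (0,1) * y = k * x" "M $$ (1,0) * x + M $$ (1,1) * y = k * y"
    using Mv[of 0] Mv[of 1] v(1,3) by (simp_all add: x_def y_def)
  hence "cnj x * (M $$ (0,0) * x + M $$ (0,1) * y) + cnj y * (M $$ (1,0) * x + M $$ (1,1) * y)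
      = k * complex_of_real N"
    unfolding N_def by (simp add: algebra_simps flip: complex_norm_square)
  hence rayleigh: "k * complex_of_real N = (\<Sum>i<2*d. D $$ (i,i) * complex_of_real (qubit_weight d R x y i))"
    unfolding M_def ptrace_conj_diagonal_quadratic_form[OF unitary_matD(1)[OF R] D] by simp
  have "Re k * N = (\<Sum>i\<in>{..<2*d}. Re (D $$ (i,i)) * qubit_weight d R x y i)"
    using arg_cong[OF rayleigh, of Re] by (simp add: Re_sum)
  also have "\<dots> \<le> N * (\<Sum>i\<in>S. Re (D $$ (i,i)))"
  proof (rule sum_weighted_le_top_sum)
    show "S \<noteq> {}" using S d by auto
    show "\<forall>i\<in>{..<2*d}. 0 \<le> qubit_weight d R x y i \<and> qubit_weight d R x y i \<le> N"
      using qubit_weight_nonneg qubit_weight_le[OF R] unfolding N_def by auto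
    show "(\<Sum>i\<in>{..<2*d}. qubit_weight d R x y i) = real (card S) * N"
      using sum_qubit_weight[OF R] S unfolding N_def by simp
  qed (use S top in auto)
  finally have "N * Re k \<le> N * (\<Sum>i\<in>S. Re (D $$ (i,i)))" by (simp add: mult.commute)
  moreover have "N > 0"
  proof -
    have "x \<noteq> 0 \<or> y \<noteq> 0"
      using v(1,2) unfolding x_def y_def by (auto intro!: eq_vecI simp: numeral_2_eq_2 less_Suc_eq)
    thus ?thesis unfolding N_def by (auto simp: add_pos_nonneg add_nonneg_pos)
  qed
  ultimately show ?thesis by simp
qed

section \<open>The optimal purification unitary\<close>

lemma eigenvalue_Re_le_lambda_max:
  assumes "M \<in> carrier_mat n n" "eigenvalue M k"
  shows "Re k \<le> lambda_max M"
proof -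
  have "{Re k | k. eigenvalue M k} = Re ` spectrum M" by (auto simp: spectrum_def)
  moreover have "finite (Re ` spectrum M)" using card_finite_spectrum(1)[OF assms(1)] by simp
  ultimately show ?thesis
    unfolding lambda_max_def using assms(2) by (intro Max_ge) (auto simp: spectrum_def)
qed

lemma lambda_max_le:
  assumes "M \<in> carrier_mat n n" "n > 0" "\<And>k. eigenvalue M k \<Longrightarrow> Re k \<le> T"
  shows "lambda_max M \<le> T"
proof -
  have "{Re k | k. eigenvalue M k} = Re ` spectrum M" by (auto simp: spectrum_def)
  moreover have "finite (Re ` spectrum M)" using card_finite_spectrum(1)[OF assms(1)] by simp
  moreover have "Re ` spectrum M \<noteq> {}" using spectrum_non_empty[OF assms(1,2)] by simp
  ultimately show ?thesis
    unfolding lambda_max_def using assms(3) by (subst Max_le_iff) (auto simp: spectrum_def)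
qed

lemma purif_channel_carrier: "purif_channel d U \<rho> \<in> carrier_mat 2 2"
  by (simp add: purif_channel_def)

lemma mult_conj_assoc:
  assumes "A \<in> carrier_mat n n" "B \<in> carrier_mat n n" "X \<in> carrier_mat n n"
  shows "(A * B) * X * adj (A * B) = A * (B * X * adj B) * adj A"
  using assms
  by (simp add: adj_mult[of _ n n _ n] assoc_mult_mat[of _ n n _ n _ n] mult_carrier_mat[of _ n n _ n])

lemma purif_channel_eigenbasis:
  assumes W: "eigenbasis n \<rho> W" and \<rho>: "\<rho> \<in> carrier_mat n n" and U: "U \<in> carrier_mat n n"
  shows "purif_channel d U \<rho> = ptrace_A 2 d ((U * W) * (adj W * \<rho> * W) * adj (U * W))"
proof -
  note Wd = unitary_matD[OF W[unfolded eigenbasis_def, THEN conjunct1]]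
  have "W * (adj W * \<rho> * W) * adj W = (W * adj W) * \<rho> * (W * adj W)"
    using Wd(1,2) \<rho> by (simp add: assoc_mult_mat[of _ n n _ n _ n] mult_carrier_mat[of _ n n _ n])
  also have "\<dots> = \<rho>" using Wd \<rho> by simp
  finally have "W * (adj W * \<rho> * W) * adj W = \<rho>" .
  moreover have "adj W * \<rho> * W \<in> carrier_mat n n" using Wd \<rho> by (meson mult_carrier_mat)
  ultimately show ?thesis
    unfolding purif_channel_def using mult_conj_assoc[OF U Wd(1)] by metis
qed

lemma lambda_max_purif_channel_le_top_sum:
  assumes d: "d > 0" and W: "eigenbasis (2*d) \<rho> W" and \<rho>: "\<rho> \<in> carrier_mat (2*d) (2*d)"
    and U: "unitary_mat (2*d) U" and \<tau>: "\<tau> permutes {..<2*d}"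
    and top: "\<forall>i\<in>\<tau> ` {..<d}. \<forall>j\<in>{..<2*d} - \<tau> ` {..<d}.
      Re ((adj W * \<rho> * W) $$ (j,j)) \<le> Re ((adj W * \<rho> * W) $$ (i,i))"
  shows "lambda_max (purif_channel d U \<rho>) \<le> (\<Sum>b<d. Re ((adj W * \<rho> * W) $$ (\<tau> b, \<tau> b)))"
proof -
  note W' = W[unfolded eigenbasis_def]
  note Wd = unitary_matD[OF W'[THEN conjunct1]]
  have D: "adj W * \<rho> * W \<in> carrier_mat (2*d) (2*d)" using Wd \<rho> by (meson mult_carrier_mat)
  have inj: "inj_on \<tau> {..<d}" using permutes_inj[OF \<tau>] by (simp add: inj_on_def inj_def)
  have S: "\<tau> ` {..<d} \<subseteq> {..<2*d}" "card (\<tau> ` {..<d}) = d"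
    using permutes_in_image[OF \<tau>] card_image[OF inj] by (fastforce, simp)
  have "lambda_max (purif_channel d U \<rho>) \<le> (\<Sum>i\<in>\<tau> ` {..<d}. Re ((adj W * \<rho> * W) $$ (i,i)))"
  proof (rule lambda_max_le[OF purif_channel_carrier])
    fix k assume "eigenvalue (purif_channel d U \<rho>) k"
    thus "Re k \<le> (\<Sum>i\<in>\<tau> ` {..<d}. Re ((adj W * \<rho> * W) $$ (i,i)))"
      unfolding purif_channel_eigenbasis[OF W \<rho> unitary_matD(1)[OF U]]
      by (rule eigenvalue_ptrace_conj_le_top_sum[OF d unitary_mat_mult[OF U W'[THEN conjunct1]] D
            W'[THEN conjunct2] S top])
  qed simp
  also have "\<dots> = (\<Sum>b<d. Re ((adj W * \<rho> * W) $$ (\<tau> b, \<tau> b)))"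
    unfolding sum.reindex[OF inj] comp_def ..
  finally show ?thesis .
qed

lemma top_sum_le_lambda_max_purif_channel_perm:
  assumes VT: "eigenbasis 2 \<rho>T VT" and VA: "eigenbasis d \<rho>A VA"
    and \<rho>T: "\<rho>T \<in> carrier_mat 2 2" and \<rho>A: "\<rho>A \<in> carrier_mat d d"
    and \<tau>: "\<tau> permutes {..<2*d}"
  defines "D \<equiv> adj (kron VT VA) * kron \<rho>T \<rho>A * kron VT VA"
  shows "(\<Sum>b<d. Re (D $$ (\<tau> b, \<tau> b))) \<le>
    lambda_max (purif_channel d (perm_mat_wrt (kron VT VA) (2*d) (inv_into UNIV \<tau>)) (kron \<rho>T \<rho>A))"
proof -
  define W P U where "W = kron VT VA" and "P = perm_mat (2*d) (inv_into UNIV \<tau>)"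
    and "U = perm_mat_wrt W (2*d) (inv_into UNIV \<tau>)"
  define D' where "D' = mat (2*d) (2*d) (\<lambda>(i,j). D $$ (\<tau> i, \<tau> j))"
  have W: "eigenbasis (2*d) (kron \<rho>T \<rho>A) W"
    unfolding W_def by (rule eigenbasis_kron[OF VT VA \<rho>T \<rho>A])
  note VTd = unitary_matD[OF VT[unfolded eigenbasis_def, THEN conjunct1]]
  note Wd = unitary_matD[OF W[unfolded eigenbasis_def, THEN conjunct1]]
  have \<rho>: "kron \<rho>T \<rho>A \<in> carrier_mat (2*d) (2*d)" using \<rho>T \<rho>A by simp
  have P: "P \<in> carrier_mat (2*d) (2*d)" by (simp add: P_def perm_mat_def)
  have U: "U \<in> carrier_mat (2*d) (2*d)"
    unfolding U_def perm_mat_wrt_def P_def[symmetric] using Wd P by (meson mult_carrier_mat)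
  have D: "D \<in> carrier_mat (2*d) (2*d)" "diagonal_mat D"
    using Wd \<rho> W unfolding D_def W_def[symmetric] eigenbasis_def by (meson mult_carrier_mat)+
  have PDP: "P * D * adj P = D'"
    unfolding P_def D'_def perm_mat_conj[OF permutes_inv[OF \<tau>] D(1)] permutes_inv_inv[OF \<tau>] ..
  have \<tau>_less: "\<tau> i < 2*d" if "i < 2*d" for i
    using permutes_in_image[OF \<tau>] that by simp
  have D': "D' \<in> carrier_mat (2*d) (2*d)" "diagonal_mat D'"
    using D \<tau>_less permutes_inj[OF \<tau>] unfolding D'_def diagonal_mat_def by (auto dest: injD)
  have "U * W = W * P * (adj W * W)"
    unfolding U_def perm_mat_wrt_def P_def[symmetric] using Wd P
    by (simp add: assoc_mult_mat[of _ "2*d" "2*d" _ "2*d" _ "2*d"] mult_carrier_mat[of _ "2*d" "2*d" _ "2*d"])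
  hence UW: "U * W = W * P" using Wd P by simp
  have "purif_channel d U (kron \<rho>T \<rho>A) = ptrace_A 2 d ((U * W) * D * adj (U * W))"
    unfolding D_def W_def[symmetric] by (rule purif_channel_eigenbasis[OF W \<rho> U])
  also have "\<dots> = ptrace_A 2 d (W * D' * adj W)"
    unfolding UW mult_conj_assoc[OF Wd(1) P D(1)] PDP ..
  also have "\<dots> = VT * ptrace_A 2 d D' * adj VT"
    unfolding W_def by (rule ptrace_A_kron_conj[OF VTd(1) _ D'(1)]) (use VA in \<open>simp add: eigenbasis_def\<close>)
  finally have "eigenvalue (purif_channel d U (kron \<rho>T \<rho>A)) (ptrace_A 2 d D' $$ (0,0))"
    using eigenvalue_unitary_conj_diagonal[of 2 VT "ptrace_A 2 d D'" 0] VT diagonal_ptrace_A[OF D']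
    by (simp add: eigenbasis_def)
  moreover have "ptrace_A 2 d D' $$ (0,0) = (\<Sum>b<d. D $$ (\<tau> b, \<tau> b))"
    by (simp add: index_ptrace_A D'_def)
  ultimately show ?thesis
    using eigenvalue_Re_le_lambda_max[OF purif_channel_carrier] by (fastforce simp: Re_sum U_def W_def)
qed

text \<open>A permutation maximising \<open>\<Sum>b<d. \<mu> (\<tau> b)\<close> cannot be improved by a transposition, so it
  maps \<open>{..<d}\<close> onto indices of \<open>d\<close> largest values.\<close>

lemma exists_permutation_onto_top_values:
  fixes \<mu> :: "nat \<Rightarrow> real"
  assumes "d \<le> n"
  shows "\<exists>\<tau>. \<tau> permutes {..<n} \<and> (\<forall>i\<in>\<tau> ` {..<d}. \<forall>j\<in>{..<n} - \<tau> ` {..<d}. \<mu> j \<le> \<mu> i)"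
proof -
  define F where "F = {p. p permutes {..<n}}"
  define f where "f = (\<lambda>p. \<Sum>b<d. \<mu> (p b))"
  have F: "finite F" "F \<noteq> {}" unfolding F_def by (auto intro: finite_permutations permutes_id)
  have "Max (f ` F) \<in> f ` F" using F by (intro Max_in) auto
  then obtain \<tau> where \<tau>F: "\<tau> \<in> F" and \<tau>_max: "f \<tau> = Max (f ` F)" by auto
  have best: "f p \<le> f \<tau>" if "p \<in> F" for p
    unfolding \<tau>_max using F that by simp
  have \<tau>: "\<tau> permutes {..<n}" using \<tau>F F_def by simp
  show ?thesis
  proof (intro exI conjI ballI)
    fix i j assume i: "i \<in> \<tau> ` {..<d}" and j: "j \<in> {..<n} - \<tau> ` {..<d}"
    obtain b0 where b0: "b0 < d" "i = \<tau> b0" using i by auto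
    have i_less: "i < n" using b0 assms permutes_in_image[OF \<tau>, of b0] by auto
    define p where "p = Transposition.transpose i j \<circ> \<tau>"
    have "p \<in> F" unfolding p_def F_def
      using permutes_compose[OF \<tau> permutes_swap_id, of i j] i_less j by auto
    have "f p = (\<Sum>b<d. \<mu> (\<tau> b) + (if b = b0 then \<mu> j - \<mu> i else 0))"
      unfolding f_def p_def
    proof (intro sum.cong refl)
      fix b assume b: "b \<in> {..<d}"
      show "\<mu> ((Transposition.transpose i j \<circ> \<tau>) b) = \<mu> (\<tau> b) + (if b = b0 then \<mu> j - \<mu> i else 0)"
      proof (cases "b = b0")
        case False
        hence "\<tau> b \<noteq> i" using b0 permutes_inj[OF \<tau>] by (auto dest: injD)
        moreover have "\<tau> b \<noteq> j" using j b by auto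
        ultimately show ?thesis using False by simp
      qed (use b0 in simp)
    qed
    also have "\<dots> = f \<tau> + (\<mu> j - \<mu> i)" unfolding f_def sum.distrib using b0 by simp
    finally show "\<mu> j \<le> \<mu> i" using best[OF \<open>p \<in> F\<close>] by simp
  qed (fact \<tau>)
qed

theorem lemma1:
  fixes d :: nat and \<rho>T \<rho>A :: "complex mat"
  assumes "d \<ge> 2"
    and "density_mat 2 \<rho>T"
    and "density_mat d \<rho>A"
  shows "\<exists>VT VA \<sigma>. eigenbasis 2 \<rho>T VT \<and> eigenbasis d \<rho>A VA \<and> \<sigma> permutes {..<2*d} \<and>
           (\<forall>U. unitary_mat (2*d) U \<longrightarrow>
              lambda_max (purif_channel d U (kron \<rho>T \<rho>A))
                \<le> lambda_max (purif_channel d (perm_mat_wrt (kron VT VA) (2*d) \<sigma>) (kron \<rho>T \<rho>A)))"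
proof -
  obtain VT VA where VT: "eigenbasis 2 \<rho>T VT" and VA: "eigenbasis d \<rho>A VA"
    using density_mat_eigenbasis_exists assms(2,3) by metis
  have \<rho>T: "\<rho>T \<in> carrier_mat 2 2" and \<rho>A: "\<rho>A \<in> carrier_mat d d"
    using assms(2,3) by (simp_all add: density_mat_def)
  have d: "d > 0" "d \<le> 2*d" using assms(1) by simp_all
  define D where "D = adj (kron VT VA) * kron \<rho>T \<rho>A * kron VT VA"
  obtain \<tau> where \<tau>: "\<tau> permutes {..<2*d}"
    and top: "\<forall>i\<in>\<tau> ` {..<d}. \<forall>j\<in>{..<2*d} - \<tau> ` {..<d}. Re (D $$ (j,j)) \<le> Re (D $$ (i,i))"
    using exists_permutation_onto_top_values[OF d(2), where \<mu> = "\<lambda>i. Re (D $$ (i,i))"] by blast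
  show ?thesis
  proof (intro exI conjI allI impI)
    fix U assume U: "unitary_mat (2*d) U"
    have "lambda_max (purif_channel d U (kron \<rho>T \<rho>A)) \<le> (\<Sum>b<d. Re (D $$ (\<tau> b, \<tau> b)))"
      unfolding D_def using \<rho>T \<rho>A top[unfolded D_def]
      by (intro lambda_max_purif_channel_le_top_sum[OF d(1) eigenbasis_kron[OF VT VA \<rho>T \<rho>A] _ U \<tau>]) simp_all
    also have "\<dots> \<le> lambda_max (purif_channel d (perm_mat_wrt (kron VT VA) (2*d) (inv_into UNIV \<tau>)) (kron \<rho>T \<rho>A))"
      unfolding D_def by (rule top_sum_le_lambda_max_purif_channel_perm[OF VT VA \<rho>T \<rho>A \<tau>])
    finally show "lambda_max (purif_channel d U (kron \<rho>T \<rho>A))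
        \<le> lambda_max (purif_channel d (perm_mat_wrt (kron VT VA) (2*d) (inv_into UNIV \<tau>)) (kron \<rho>T \<rho>A))" .
  qed (fact VT VA permutes_inv[OF \<tau>])+
qed

end
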